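(* Let $\Lambda\ge2$ be an integer, let $q\in\mathbb C$ satisfy $|q-1|>1$, and set $t_0=1/(1-q)$, $\rho=|t_0|$. Suppose real numbers $r_1,\dots,r_{\Lambda-1}$ satisfy $\rho^2\le r_1\le r_2\le\cdots\le r_{\Lambda-1}\le\rho$ and, for $2\le s\le\Lambda-1$, $$r_s\ \ge\ \max\{|t_e\|_q t_f| : t_e\in D(r_k),\ t_f\in D(r_\ell),\ k,\ell\ge1,\ k+\ell=s\}.$$ Define $S_i=\{t_0\}\cup D(r_i)$ for $1\le i\le\Lambda-1$. Then $S_1\subseteq\cdots\subseteq S_{\Lambda-1}$ and: (1) $\{t t': t\in S_k,\ t'\in S_\ell\}\subseteq S_{\min(k,\ell)}$ for all $k,\ell\in\{1,\dots,\Lambda-1\}$; (2) for $k,\ell\ge1$ with $k+\ell\le\Lambda-1$ and all $t\in S_k$, $t'\in S_\ell$: $1+(q-1)tt'\ne0$ and $t\|_q t'\in S_{k+\ell}$; (3') $1\notin S_{\Lambda-1}$; (4) for $k,\ell\ge1$ with $k+\ell=\Lambda$ and all $t\in S_k$, $t'\in S_\ell$: $1+(q-1)tt'\ne0$.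
   Context: $D(r)=\{t\in\mathbb C:|t|\le r\}$. For $t,t'\in\mathbb C$ with $1+(q-1)tt'\ne0$, the parallel connection of transmissivities is $t\|_q t'=\dfrac{t+t'+(q-2)tt'}{1+(q-1)tt'}$ (this is always defined for $t,t'\in D(\rho)$ since $|q-1||tt'|\le\rho<1$). *)

theory Defs
  imports Complex_Main
begin

definition D :: "real \<Rightarrow> complex set" where
  "D r = {t. cmod t \<le> r}"

text \<open>Parallel connection of transmissivities (meaningful when the denominator is nonzero).\<close>
definition par :: "complex \<Rightarrow> complex \<Rightarrow> complex \<Rightarrow> complex" where
  "par q t t' = (t + t' + (q - 2) * t * t') / (1 + (q - 1) * t * t')"

definition S :: "complex \<Rightarrow> (nat \<Rightarrow> real) \<Rightarrow> nat \<Rightarrow> complex set" where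
  "S q r i = insert (1 / (1 - q)) (D (r i))"

end

theory Submission
  imports Defs
begin

text \<open>Every set \<open>S\<^sub>i\<close> lies in the closed disc of radius \<open>\<rho> = 1/\<bar>q - 1\<bar> < 1\<close>. On that disc
  \<open>\<bar>(q - 1) t t'\<bar> \<le> \<rho> < 1\<close>, so the denominator of \<open>t \<parallel>\<^sub>q t'\<close> never vanishes and \<open>1\<close> is
  never reached, and products have modulus at most \<open>\<rho>\<^sup>2 \<le> r\<^sub>1\<close>. The point \<open>t\<^sub>0\<close> is absorbing
  for \<open>\<parallel>\<^sub>q\<close>, and on the discs closure under \<open>\<parallel>\<^sub>q\<close> is exactly the hypothesis on the radii.\<close>

lemma norm_one_over_one_minus: "cmod (1 / (1 - q)) = 1 / cmod (q - 1)"
  by (simp add: norm_divide norm_minus_commute)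

lemma par_commute: "par q t t' = par q t' t"
  unfolding par_def by (simp add: algebra_simps)

lemma par_absorbing:
  assumes "q \<noteq> 1" and "t \<noteq> 1"
  shows "par q (1 / (1 - q)) t = 1 / (1 - q)"
proof -
  define t\<^sub>0 where "t\<^sub>0 = 1 / (1 - q)"
  have inverse: "(q - 1) * t\<^sub>0 = -1"
    using assms(1) unfolding t\<^sub>0_def by (simp add: field_simps)
  have "t\<^sub>0 + t + (q - 2) * t\<^sub>0 * t = t\<^sub>0 * (1 - t) + t * (1 + (q - 1) * t\<^sub>0)"
    by (simp add: algebra_simps)
  also have "\<dots> = t\<^sub>0 * (1 - t)"
    using inverse by simp
  finally have "par q t\<^sub>0 t = t\<^sub>0 * (1 - t) / (1 - t)"
    unfolding par_def using inverse by simp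
  then show ?thesis
    using assms(2) unfolding t\<^sub>0_def by simp
qed

lemma par_denominator_nonzero:
  assumes "cmod (q - 1) * (cmod t * cmod t') < 1"
  shows "1 + (q - 1) * t * t' \<noteq> 0"
proof
  assume "1 + (q - 1) * t * t' = 0"
  then have "(q - 1) * t * t' = -1" by (simp add: add_eq_0_iff)
  then have "cmod (q - 1) * (cmod t * cmod t') = 1"
    by (metis norm_minus_cancel norm_mult norm_one mult.assoc)
  with assms show False by simp
qed

locale transmissivity_radii =
  fixes \<Lambda> :: nat and q :: complex and r :: "nat \<Rightarrow> real"
  assumes norm_q_minus_1_gt_1: "cmod (q - 1) > 1"
    and rho_square_le_r1: "(cmod (1 / (1 - q)))\<^sup>2 \<le> r 1"
    and r_step_mono: "\<And>i. 1 \<le> i \<Longrightarrow> i + 1 \<le> \<Lambda> - 1 \<Longrightarrow> r i \<le> r (i + 1)"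
    and r_top_le_rho: "r (\<Lambda> - 1) \<le> cmod (1 / (1 - q))"
    and par_disc_bound: "\<And>s k l te tf. 2 \<le> s \<Longrightarrow> s \<le> \<Lambda> - 1 \<Longrightarrow> 1 \<le> k \<Longrightarrow> 1 \<le> l \<Longrightarrow> k + l = s \<Longrightarrow>
                 te \<in> D (r k) \<Longrightarrow> tf \<in> D (r l) \<Longrightarrow> cmod (par q te tf) \<le> r s"
begin

abbreviation \<rho> :: real where "\<rho> \<equiv> cmod (1 / (1 - q))"

lemma q_ne_1: "q \<noteq> 1"
  using norm_q_minus_1_gt_1 by auto

lemma rho_less_1: "\<rho> < 1"
  using norm_q_minus_1_gt_1 by (simp add: norm_one_over_one_minus divide_less_eq)

lemma norm_q_minus_1_mult_rho: "cmod (q - 1) * \<rho> = 1"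
  using q_ne_1 by (simp add: norm_one_over_one_minus)

lemma r_mono: "1 \<le> i \<Longrightarrow> i \<le> j \<Longrightarrow> j \<le> \<Lambda> - 1 \<Longrightarrow> r i \<le> r j"
  by (rule lift_Suc_mono_le_ivl[where N = "{1..<\<Lambda> - 1}"]) (use r_step_mono in auto)

lemma rho_square_le_r: "1 \<le> k \<Longrightarrow> k \<le> \<Lambda> - 1 \<Longrightarrow> \<rho>\<^sup>2 \<le> r k"
  using r_mono[of 1 k] rho_square_le_r1 by simp

lemma r_le_rho: "1 \<le> k \<Longrightarrow> k \<le> \<Lambda> - 1 \<Longrightarrow> r k \<le> \<rho>"
  using r_mono[of k "\<Lambda> - 1"] r_top_le_rho by simp

lemma S_mono: "1 \<le> i \<Longrightarrow> i + 1 \<le> \<Lambda> - 1 \<Longrightarrow> S q r i \<subseteq> S q r (i + 1)"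
  using r_step_mono unfolding S_def D_def by fastforce

lemma norm_le_rho_if_in_S: "t \<in> S q r k \<Longrightarrow> 1 \<le> k \<Longrightarrow> k \<le> \<Lambda> - 1 \<Longrightarrow> cmod t \<le> \<rho>"
  using r_le_rho[of k] unfolding S_def D_def by auto

lemma denominator_nonzero_if_norm_le_rho:
  assumes "cmod t \<le> \<rho>" and "cmod t' \<le> \<rho>"
  shows "1 + (q - 1) * t * t' \<noteq> 0"
proof (rule par_denominator_nonzero)
  have "cmod t * cmod t' \<le> \<rho> * \<rho>"
    using assms by (intro mult_mono) auto
  then have "cmod (q - 1) * (cmod t * cmod t') \<le> cmod (q - 1) * \<rho> * \<rho>"
    by (simp add: mult.assoc mult_left_mono)
  also have "\<dots> = \<rho>"
    using norm_q_minus_1_mult_rho by simp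
  finally show "cmod (q - 1) * (cmod t * cmod t') < 1"
    using rho_less_1 by simp
qed

lemma denominator_nonzero:
  "\<lbrakk>t \<in> S q r k; t' \<in> S q r l; 1 \<le> k; k \<le> \<Lambda> - 1; 1 \<le> l; l \<le> \<Lambda> - 1\<rbrakk>
    \<Longrightarrow> 1 + (q - 1) * t * t' \<noteq> 0"
  by (intro denominator_nonzero_if_norm_le_rho norm_le_rho_if_in_S)

lemma mult_mem_S:
  assumes "t \<in> S q r k" "t' \<in> S q r l" "1 \<le> k" "k \<le> \<Lambda> - 1" "1 \<le> l" "l \<le> \<Lambda> - 1"
  shows "t * t' \<in> S q r (min k l)"
proof -
  have "cmod (t * t') \<le> \<rho> * \<rho>"
    unfolding norm_mult
    using norm_le_rho_if_in_S[OF assms(1,3,4)] norm_le_rho_if_in_S[OF assms(2,5,6)]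
    by (intro mult_mono) auto
  also have "\<dots> \<le> r (min k l)"
    using rho_square_le_r[of "min k l"] assms by (simp add: power2_eq_square)
  finally show ?thesis
    unfolding S_def D_def by simp
qed

lemma par_mem_S:
  assumes t: "t \<in> S q r k" and t': "t' \<in> S q r l" and "1 \<le> k" "1 \<le> l" "k + l \<le> \<Lambda> - 1"
  shows "par q t t' \<in> S q r (k + l)"
proof (cases "t = 1 / (1 - q) \<or> t' = 1 / (1 - q)")
  case True
  have "t \<noteq> 1" "t' \<noteq> 1"
    using norm_le_rho_if_in_S[OF t] norm_le_rho_if_in_S[OF t'] rho_less_1 assms by auto
  with True have "par q t t' = 1 / (1 - q)"
    using par_absorbing[OF q_ne_1] par_commute by metis
  then show ?thesis
    unfolding S_def by simp
next
  case False
  then have "t \<in> D (r k)" "t' \<in> D (r l)"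
    using t t' unfolding S_def by auto
  then have "cmod (par q t t') \<le> r (k + l)"
    using par_disc_bound[of "k + l" k l] assms by simp
  then show ?thesis
    unfolding S_def D_def by simp
qed

lemma one_not_mem_S:
  assumes "\<Lambda> \<ge> 2"
  shows "1 \<notin> S q r (\<Lambda> - 1)"
proof
  assume "1 \<in> S q r (\<Lambda> - 1)"
  then have "cmod (1::complex) \<le> \<rho>"
    using assms by (intro norm_le_rho_if_in_S) auto
  with rho_less_1 show False by simp
qed

end

theorem proposition5p2:
  fixes \<Lambda> :: nat and q :: complex and r :: "nat \<Rightarrow> real"
  assumes hL: "\<Lambda> \<ge> 2"
    and hq: "cmod (q - 1) > 1"
    and hr1: "(cmod (1 / (1 - q)))\<^sup>2 \<le> r 1"
    and hmono: "\<And>i. 1 \<le> i \<Longrightarrow> i + 1 \<le> \<Lambda> - 1 \<Longrightarrow> r i \<le> r (i + 1)"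
    and hrtop: "r (\<Lambda> - 1) \<le> cmod (1 / (1 - q))"
    and hpar: "\<And>s k l te tf. 2 \<le> s \<Longrightarrow> s \<le> \<Lambda> - 1 \<Longrightarrow> 1 \<le> k \<Longrightarrow> 1 \<le> l \<Longrightarrow> k + l = s \<Longrightarrow>
                 te \<in> D (r k) \<Longrightarrow> tf \<in> D (r l) \<Longrightarrow> cmod (par q te tf) \<le> r s"
  shows "(\<forall>i. 1 \<le> i \<and> i + 1 \<le> \<Lambda> - 1 \<longrightarrow> S q r i \<subseteq> S q r (i + 1))
    \<and> (\<forall>k l. 1 \<le> k \<and> k \<le> \<Lambda> - 1 \<and> 1 \<le> l \<and> l \<le> \<Lambda> - 1 \<longrightarrow>
          {t * t' | t t'. t \<in> S q r k \<and> t' \<in> S q r l} \<subseteq> S q r (min k l))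
    \<and> (\<forall>k l. 1 \<le> k \<and> 1 \<le> l \<and> k + l \<le> \<Lambda> - 1 \<longrightarrow>
          (\<forall>t \<in> S q r k. \<forall>t' \<in> S q r l. 1 + (q - 1) * t * t' \<noteq> 0 \<and> par q t t' \<in> S q r (k + l)))
    \<and> 1 \<notin> S q r (\<Lambda> - 1)
    \<and> (\<forall>k l. 1 \<le> k \<and> 1 \<le> l \<and> k + l = \<Lambda> \<longrightarrow>
          (\<forall>t \<in> S q r k. \<forall>t' \<in> S q r l. 1 + (q - 1) * t * t' \<noteq> 0))"
proof -
  interpret transmissivity_radii \<Lambda> q r
    using hq hr1 hmono hrtop hpar by unfold_locales
  show ?thesis
  proof (intro conjI allI impI ballI)
    fix i assume "1 \<le> i \<and> i + 1 \<le> \<Lambda> - 1"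
    then show "S q r i \<subseteq> S q r (i + 1)" by (intro S_mono) auto
  next
    fix k l assume "1 \<le> k \<and> k \<le> \<Lambda> - 1 \<and> 1 \<le> l \<and> l \<le> \<Lambda> - 1"
    then show "{t * t' | t t'. t \<in> S q r k \<and> t' \<in> S q r l} \<subseteq> S q r (min k l)"
      using mult_mem_S by blast
  next
    fix k l t t' assume "1 \<le> k \<and> 1 \<le> l \<and> k + l \<le> \<Lambda> - 1" "t \<in> S q r k" "t' \<in> S q r l"
    then show "1 + (q - 1) * t * t' \<noteq> 0" by (intro denominator_nonzero) auto
  next
    fix k l t t' assume "1 \<le> k \<and> 1 \<le> l \<and> k + l \<le> \<Lambda> - 1" "t \<in> S q r k" "t' \<in> S q r l"
    then show "par q t t' \<in> S q r (k + l)" using par_mem_S by simp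
  next
    show "1 \<notin> S q r (\<Lambda> - 1)" using hL by (rule one_not_mem_S)
  next
    fix k l t t' assume "1 \<le> k \<and> 1 \<le> l \<and> k + l = \<Lambda>" "t \<in> S q r k" "t' \<in> S q r l"
    then show "1 + (q - 1) * t * t' \<noteq> 0" by (intro denominator_nonzero) auto
  qed
qed

end
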